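(* Let $\xi=e^{i\pi/5}$, $\tau=\frac{1+\sqrt5}{2}$. For $n\in\mathbb{N}_0$ let $Q_2(n)=\{\sum_{j=0}^9 n_j\xi^j: n_j\in\mathbb{N}_0,\ \sum_j n_j\le n\}$ and $L(n)=Q_2(n)\cap\mathbb{R}$. Then $$L(n)=\{(a+c)+(b-c)\tau \mid a,b,c\in\mathbb{Z},\ |a|+2|b|+2|c|\le n\}.$$
   Context: $L(n)$ is denoted $L_{\alpha_1}(n)$ in the paper. *)

theory Defs
  imports "HOL-Analysis.Analysis"
begin

definition xi :: complex where
  "xi = cis (pi / 5)"

definition tau :: real where
  "tau = (1 + sqrt 5) / 2"

definition Q2 :: "nat \<Rightarrow> complex set" where
  "Q2 n = {(\<Sum>j<10. of_nat (m j) * xi ^ j) | m :: nat \<Rightarrow> nat. (\<Sum>j<10. m j) \<le> n}"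

definition L :: "nat \<Rightarrow> real set" where
  "L n = {x :: real. complex_of_real x \<in> Q2 n}"

end

theory Submission
  imports Defs "HOL-Computational_Algebra.Primes"
begin

(* Since xi^5 = -1, a sum of at most n tenth roots of unity is the same thing as a combination
   sum_{j<5} d_j xi^j with integers d_j and sum_j |d_j| <= n: fold m_j and m_{j+5} into
   d_j = m_j - m_{j+5}, and conversely split d_j into its positive and negative parts.
   As xi^(5-j) = -cnj(xi^j), the imaginary part of such a combination is
   sin(pi/5) ((d_1 + d_4) + (d_2 + d_3) tau), which by the irrationality of tau vanishes iff
   d_4 = -d_1 and d_3 = -d_2. With cos(pi/5) = tau/2 and cos(2pi/5) = (tau - 1)/2 the real part
   is then (d_0 - d_2) + (d_1 + d_2) tau, and a = d_0, b = d_1, c = -d_2 gives the claim. *)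

lemma sqrt_prime_irrational:
  assumes "prime (p :: nat)"
  shows "sqrt (real p) \<notin> \<rat>"
proof
  assume "sqrt (real p) \<in> \<rat>"
  then obtain a b :: nat where "b \<noteq> 0" and ab: "\<bar>sqrt (real p)\<bar> = real a / real b"
    and "coprime a b"
    by (rule Rats_abs_nat_div_natE)
  have "real p = (real a / real b)^2"
    by (simp flip: ab)
  then have "real (a^2) = real (p * b^2)"
    using \<open>b \<noteq> 0\<close> by (simp add: field_simps)
  then have eq: "a^2 = p * b^2"
    by (simp only: of_nat_eq_iff)
  then have "p dvd a"
    using assms prime_dvd_power by (metis dvd_triv_left)
  then obtain c where "a = p * c" ..
  with eq have "b^2 = p * c^2"
    using prime_gt_0_nat[OF assms] by (simp add: power2_eq_square algebra_simps)
  then have "p dvd b"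
    using assms prime_dvd_power by (metis dvd_triv_left)
  with \<open>coprime a b\<close> \<open>p dvd a\<close> have "is_unit p"
    by (rule coprime_common_divisor)
  with assms show False
    by (simp add: not_prime_unit)
qed

lemma tau_irrational: "tau \<notin> \<rat>"
proof
  assume "tau \<in> \<rat>"
  then have "2 * tau - 1 \<in> \<rat>"
    by (intro Rats_diff Rats_mult) auto
  moreover have "2 * tau - 1 = sqrt (real 5)"
    by (simp add: tau_def field_simps)
  ultimately show False
    using sqrt_prime_irrational[of 5] by simp
qed

lemma irrational_lincomb_eq_0_iff:
  fixes \<theta> :: real
  assumes "\<theta> \<notin> \<rat>"
  shows "of_int p + of_int q * \<theta> = 0 \<longleftrightarrow> p = 0 \<and> q = 0"
proof (cases "q = 0")
  case False
  then have "of_int p + of_int q * \<theta> = 0 \<Longrightarrow> \<theta> = - of_int p / of_int q"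
    by (simp add: field_simps)
  with assms show ?thesis
    by auto
qed simp

lemma sum_lessThan_double:
  fixes f :: "nat \<Rightarrow> 'a::comm_monoid_add"
  shows "(\<Sum>j<2 * k. f j) = (\<Sum>j<k. f j + f (j + k))"
proof -
  have "(\<Sum>j<2 * k. f j) = (\<Sum>j<k. f j) + (\<Sum>j\<in>{0 + k..<k + k}. f j)"
    by (simp add: mult_2 atLeast0LessThan[symmetric] sum.atLeastLessThan_concat)
  also have "(\<Sum>j\<in>{0 + k..<k + k}. f j) = (\<Sum>j<k. f (j + k))"
    by (simp only: sum.shift_bounds_nat_ivl atLeast0LessThan)
  finally show ?thesis
    by (simp add: sum.distrib)
qed

lemma sum_lessThan_5:
  fixes f :: "nat \<Rightarrow> 'a::comm_monoid_add"
  shows "(\<Sum>j<5. f j) = f 0 + f 1 + f 2 + f 3 + f 4"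
  by (simp add: eval_nat_numeral)

lemma sum_of_powers_fold:
  fixes \<omega> :: "'a::comm_ring_1"
  assumes "\<omega>^k = -1"
  shows "(\<Sum>j<2 * k. of_nat (m j) * \<omega>^j) =
         (\<Sum>j<k. of_int (int (m j) - int (m (j + k))) * \<omega>^j)"
  unfolding sum_lessThan_double using assms by (simp add: power_add algebra_simps)

lemma sums_of_powers_fold_set:
  fixes \<omega> :: "'a::comm_ring_1"
  assumes "\<omega>^k = -1"
  shows "{\<Sum>j<2 * k. of_nat (m j) * \<omega>^j | m. (\<Sum>j<2 * k. m j) \<le> n} =
         {\<Sum>j<k. of_int (d j) * \<omega>^j | d. (\<Sum>j<k. \<bar>d j\<bar>) \<le> int n}"
    (is "?A = ?B")
proof (intro equalityI subsetI)
  fix z assume "z \<in> ?A"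
  then obtain m where z: "z = (\<Sum>j<2 * k. of_nat (m j) * \<omega>^j)"
    and m: "(\<Sum>j<2 * k. m j) \<le> n"
    by blast
  define d where "d j = int (m j) - int (m (j + k))" for j
  have "(\<Sum>j<k. \<bar>d j\<bar>) \<le> (\<Sum>j<k. int (m j) + int (m (j + k)))"
    unfolding d_def by (intro sum_mono) linarith
  also have "\<dots> \<le> int n"
    using m by (simp add: sum_lessThan_double flip: of_nat_add of_nat_sum)
  moreover have "z = (\<Sum>j<k. of_int (d j) * \<omega>^j)"
    unfolding z d_def by (rule sum_of_powers_fold[OF assms])
  ultimately show "z \<in> ?B"
    by (intro CollectI exI[of _ d]) simp
next
  fix z assume "z \<in> ?B"
  then obtain d where z: "z = (\<Sum>j<k. of_int (d j) * \<omega>^j)"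
    and d: "(\<Sum>j<k. \<bar>d j\<bar>) \<le> int n"
    by blast
  define m where "m j = (if j < k then nat (d j) else nat (- d (j - k)))" for j
  have m_fold: "int (m j) - int (m (j + k)) = d j" "int (m j) + int (m (j + k)) = \<bar>d j\<bar>"
    if "j < k" for j
    using that by (auto simp add: m_def)
  have "int (\<Sum>j<2 * k. m j) = (\<Sum>j<k. int (m j) + int (m (j + k)))"
    by (simp add: sum_lessThan_double)
  also have "\<dots> = (\<Sum>j<k. \<bar>d j\<bar>)"
    by (rule sum.cong) (simp_all add: m_fold)
  finally have "(\<Sum>j<2 * k. m j) \<le> n"
    using d by linarith
  moreover have "z = (\<Sum>j<2 * k. of_nat (m j) * \<omega>^j)"
    by (simp add: z sum_of_powers_fold[OF assms] m_fold)
  ultimately show "z \<in> ?A"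
    by blast
qed

lemma tau_squared: "tau^2 = tau + 1"
  unfolding tau_def by (simp add: power2_eq_square field_simps)

lemma cos_pi_div_5: "cos (pi / 5) = tau / 2"
proof -
  define c where "c = cos (pi / 5)"
  have "cos (3 * (pi / 5)) = 4 * c^3 - 3 * c"
    unfolding c_def by (rule cos_treble_cos)
  moreover have "cos (3 * (pi / 5)) = - cos (2 * (pi / 5))"
    using cos_pi_minus[of "2 * (pi / 5)"] by simp
  moreover have "cos (2 * (pi / 5)) = 2 * c^2 - 1"
    unfolding c_def by (rule cos_double_cos)
  ultimately have "(c + 1) * (4 * c^2 - 2 * c - 1) = 0"
    by algebra
  moreover have "c > 0"
    unfolding c_def using pi_gt_zero by (intro cos_gt_zero_pi) linarith+
  ultimately have "4 * c^2 - 2 * c - 1 = 0"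
    by simp
  then have "(4 * c - 1)^2 = 5"
    by (simp add: power2_eq_square algebra_simps)
  with \<open>c > 0\<close> have "4 * c - 1 = sqrt 5"
    by (smt (verit) real_sqrt_abs real_sqrt_ge_one)
  then show ?thesis
    unfolding c_def tau_def by simp
qed

lemma xi_eq: "xi = Complex (tau / 2) (sin (pi / 5))"
  by (simp add: xi_def complex_eq_iff cos_pi_div_5)

lemma xi_squared: "xi^2 = Complex ((tau - 1) / 2) (tau * sin (pi / 5))"
proof -
  have "(sin (pi / 5))^2 = 1 - (tau / 2)^2"
    using sin_cos_squared_add[of "pi / 5"] by (simp add: cos_pi_div_5)
  then show ?thesis
    using tau_squared by (simp add: xi_eq power2_eq_square complex_eq_iff field_simps)
qed

lemma cnj_xi_mult: "cnj xi * xi = 1"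
  by (simp add: xi_def cis_cnj cis_mult)

lemma xi_power_5: "xi^5 = -1"
  by (simp add: xi_def Complex.DeMoivre)

lemma cnj_xi_power:
  assumes "j \<le> 5"
  shows "cnj (xi^j) = - (xi ^ (5 - j))"
proof -
  have "xi^j * xi ^ (5 - j) = -1"
    using assms by (simp add: xi_power_5 flip: power_add)
  then have "cnj (xi^j) = cnj (xi^j) * - (xi^j * xi ^ (5 - j))"
    by simp
  also have "\<dots> = - ((cnj xi * xi)^j * xi ^ (5 - j))"
    by (simp add: power_mult_distrib mult.assoc)
  finally show ?thesis
    by (simp add: cnj_xi_mult)
qed

lemma sum_xi_powers_5:
  "(\<Sum>j<5. of_int (d j) * xi^j) =
     Complex (of_int (d 0) + of_int (d 1 - d 4) * tau / 2 + of_int (d 2 - d 3) * (tau - 1) / 2)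
             ((of_int (d 1 + d 4) + of_int (d 2 + d 3) * tau) * sin (pi / 5))"
  (is "_ = ?rhs")
proof -
  have "xi^3 = - cnj (xi^2)" "xi^4 = - cnj xi"
    using cnj_xi_power[of 2] cnj_xi_power[of 1] by simp_all
  then have "(\<Sum>j<5. of_int (d j) * xi^j) = of_int (d 0) + of_int (d 1) * xi
      + of_int (d 2) * xi^2 - of_int (d 3) * cnj (xi^2) - of_int (d 4) * cnj xi"
    by (simp add: sum_lessThan_5)
  also have "\<dots> = ?rhs"
    unfolding xi_squared by (simp add: complex_eq_iff xi_eq field_simps)
  finally show ?thesis .
qed

lemma of_real_eq_sum_xi_powers_5_iff:
  "of_real x = (\<Sum>j<5. of_int (d j) * xi^j) \<longleftrightarrow>
     d 4 = - d 1 \<and> d 3 = - d 2 \<and> x = of_int (d 0 - d 2) + of_int (d 1 + d 2) * tau"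
proof -
  have "sin (pi / 5) > 0"
    using pi_gt_zero by (intro sin_gt_zero) linarith+
  then have im: "(of_int (d 1 + d 4) + of_int (d 2 + d 3) * tau) * sin (pi / 5) = 0 \<longleftrightarrow>
      d 4 = - d 1 \<and> d 3 = - d 2"
    using irrational_lincomb_eq_0_iff[OF tau_irrational, of "d 1 + d 4" "d 2 + d 3"] by auto
  have re: "of_int (d 0) + of_int (d 1 - d 4) * tau / 2 + of_int (d 2 - d 3) * (tau - 1) / 2 =
      of_int (d 0 - d 2) + of_int (d 1 + d 2) * tau" if "d 4 = - d 1" "d 3 = - d 2"
    using that by (simp add: field_simps)
  show ?thesis
    using im re by (auto simp add: sum_xi_powers_5 complex_eq_iff)
qed

lemma Q2_eq_folded:
  "Q2 n = {\<Sum>j<5. of_int (d j) * xi^j | d :: nat \<Rightarrow> int. (\<Sum>j<5. \<bar>d j\<bar>) \<le> int n}"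
  using sums_of_powers_fold_set[OF xi_power_5, of n] by (simp add: Q2_def)

lemma L_eq_folded:
  "L n = {of_int (d 0 - d 2) + of_int (d 1 + d 2) * tau | d :: nat \<Rightarrow> int.
            (\<Sum>j<5. \<bar>d j\<bar>) \<le> int n \<and> d 4 = - d 1 \<and> d 3 = - d 2}"
  unfolding L_def Q2_eq_folded by (auto simp add: of_real_eq_sum_xi_powers_5_iff)

theorem corollary6p7:
  fixes n :: nat
  shows "L n = {real_of_int (a + c) + real_of_int (b - c) * tau | a b c :: int.
                 \<bar>a\<bar> + 2 * \<bar>b\<bar> + 2 * \<bar>c\<bar> \<le> int n}"
  unfolding L_eq_folded
proof (intro equalityI subsetI; elim CollectE exE conjE)
  fix x and d :: "nat \<Rightarrow> int"
  assume "x = of_int (d 0 - d 2) + of_int (d 1 + d 2) * tau"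
    and "(\<Sum>j<5. \<bar>d j\<bar>) \<le> int n" "d 4 = - d 1" "d 3 = - d 2"
  then show "x \<in> {real_of_int (a + c) + real_of_int (b - c) * tau | a b c :: int.
                 \<bar>a\<bar> + 2 * \<bar>b\<bar> + 2 * \<bar>c\<bar> \<le> int n}"
    by (intro CollectI exI[of _ "d 0"] exI[of _ "d 1"] exI[of _ "- d 2"])
       (simp add: sum_lessThan_5)
next
  fix x and a b c :: int
  assume "x = real_of_int (a + c) + real_of_int (b - c) * tau"
    and "\<bar>a\<bar> + 2 * \<bar>b\<bar> + 2 * \<bar>c\<bar> \<le> int n"
  then show "x \<in> {of_int (d 0 - d 2) + of_int (d 1 + d 2) * tau | d :: nat \<Rightarrow> int.
                 (\<Sum>j<5. \<bar>d j\<bar>) \<le> int n \<and> d 4 = - d 1 \<and> d 3 = - d 2}"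
    by (intro CollectI exI[of _ "\<lambda>j. [a, b, - c, c, - b] ! j"])
       (simp add: sum_lessThan_5)
qed

end
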